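(* There exist constants $\varepsilon_0>0$ and $C_1>0$ such that the following holds. Let $r>0$, $\delta>0$, $R:=r/\delta$, $\varepsilon:=R+\tfrac12-\lfloor R+\tfrac12\rfloor$. If $\varepsilon\in[0,\varepsilon_0]$ and $R$ is sufficiently large, then $$\int_{-\pi}^{\pi}\Delta_\delta(r\cos\theta)\cos\theta\,d\theta\ \ge\ C_1\,\frac{\delta^{3/2}}{\sqrt r}.$$
   Context: For $\delta>0$, $Q_\delta(t):=\delta\lfloor t/\delta+1/2\rfloor$ and $\Delta_\delta(t):=t-Q_\delta(t)$. *)

theory Defs
  imports "HOL-Analysis.Analysis"
begin

definition Qd :: "real \<Rightarrow> real \<Rightarrow> real" where
  "Qd \<delta> t = \<delta> * of_int \<lfloor>t / \<delta> + 1/2\<rfloor>"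

definition Dd :: "real \<Rightarrow> real \<Rightarrow> real" where
  "Dd \<delta> t = t - Qd \<delta> t"

end

theory Submission
  imports Defs "HOL-Analysis.Analysis"
begin

(* Scaling by delta reduces the claim to the normalised integral
   I(R) = \<integral>_{-pi}^{pi} e(R cos t) cos t dt, with e(x) = x - round x and R = r/delta;
   indeed the integral in the theorem equals delta * I(r/delta).
   (1) Since e(y) + e(-y) \<le> 0, folding [-pi,pi] onto [0,pi/2] gives I(R) \<ge> 4 J(R),
       where J(R) is the integral over [0,pi/2].
   (2) Let level_angle R j be the angle where R cos t = j + 1/2.  Between two consecutive
       level angles e(R cos t) = R cos t - j, and comparing with j cos t - j^2/R reduces the
       piece to the error of the trapezoidal rule for sin, which is \<ge> j k (b - a)^3 / 12
       whenever cos \<ge> k on the arc.  Hence every piece is nonnegative.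
   (3) On the arc [0, a] next to t = 0 we only use e \<ge> -1/2.
   (4) If R + 1/2 is only slightly above an integer, the arc [0,a] has length O(sqrt(eps/R)),
       while the last complete arc [a,b] has length \<ge> 1/sqrt R; the latter piece therefore
       contributes \<ge> R/2 * (b - a)^3 / 24 \<ge> 1/(48 sqrt R), which beats a/2.
   This yields I(R) \<ge> 1/(20 sqrt R) for R \<ge> 10 and eps \<le> 1/16000. *)

definition rnd_err :: "real \<Rightarrow> real" where
  "rnd_err x = x - of_int \<lfloor>x + 1/2\<rfloor>"

abbreviation err_cos :: "real \<Rightarrow> real \<Rightarrow> real" where
  "err_cos R t \<equiv> rnd_err (R * cos t) * cos t"

lemma rnd_err_bounds: "-1/2 \<le> rnd_err x" "rnd_err x < 1/2"
  unfolding rnd_err_def using floor_correct[of "x + 1/2"] by linarith+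

lemma Dd_cos_scale:
  assumes "\<delta> > 0"
  shows "Dd \<delta> (r * cos t) * cos t = \<delta> * err_cos (r / \<delta>) t"
proof -
  have "r * cos t / \<delta> = r / \<delta> * cos t" by simp
  then show ?thesis using assms unfolding Dd_def Qd_def rnd_err_def by (simp add: algebra_simps)
qed

lemma err_cos_lower: "-1/2 \<le> err_cos R t"
proof -
  have "\<bar>rnd_err (R * cos t)\<bar> \<le> 1/2" using rnd_err_bounds[of "R * cos t"] by linarith
  then have "\<bar>err_cos R t\<bar> \<le> 1/2 * 1" unfolding abs_mult by (intro mult_mono) auto
  then show ?thesis by linarith
qed

lemma err_cos_integrable: "err_cos R integrable_on {a..b}"
proof (rule measurable_bounded_by_integrable_imp_integrable[where g="\<lambda>_. 1"])
  have "err_cos R \<in> borel_measurable borel" unfolding rnd_err_def by measurable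
  then show "err_cos R \<in> borel_measurable (lebesgue_on {a..b})"
    by (intro measurable_restrict_space1 measurable_completion) (simp add: measurable_lborel1)
  show "norm (err_cos R t) \<le> 1" for t
  proof -
    have "\<bar>rnd_err (R * cos t)\<bar> \<le> 1" using rnd_err_bounds[of "R * cos t"] by linarith
    then show ?thesis unfolding real_norm_def abs_mult by (simp add: mult_le_one)
  qed
  show "(\<lambda>_. 1::real) integrable_on {a..b}" by (rule integrable_const_ivl)
qed simp

text \<open>Rounding is "upward biased" at half-integers, so the error is not odd but
  satisfies e(y) + e(-y) \<le> 0.\<close>
lemma rnd_err_antisym: "rnd_err y + rnd_err (-y) \<le> 0"
proof -
  have "\<lfloor>y + 1/2\<rfloor> + \<lfloor>-y + 1/2\<rfloor> \<ge> 0"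
    using floor_correct[of "y + 1/2"] floor_correct[of "-y + 1/2"] by linarith
  then have "real_of_int \<lfloor>y + 1/2\<rfloor> + real_of_int \<lfloor>-y + 1/2\<rfloor> \<ge> 0"
    by (metis of_int_0_le_iff of_int_add)
  then show ?thesis unfolding rnd_err_def by simp
qed

text \<open>The halves [-pi,0] and [0,pi] agree by evenness; on [pi/2,pi] we substitute t = pi - x,
  which turns the integrand into -err_cos (-R), and use the antisymmetry inequality.\<close>
lemma integral_period_ge_quarter:
  "4 * integral {0..pi/2} (err_cos R) \<le> integral {-pi..pi} (err_cos R)"
proof -
  let ?F = "err_cos R"
  let ?G = "\<lambda>x. ?F (pi - x)"
  have halves: "integral {-pi..0} ?F + integral {0..pi} ?F = integral {-pi..pi} ?F"
    by (rule Henstock_Kurzweil_Integration.integral_combine[OF _ _ err_cos_integrable]) auto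
  have "integral {-pi..-0} (\<lambda>x. ?F (-x)) = integral {0..pi} ?F"
    by (rule Henstock_Kurzweil_Integration.integral_reflect_real)
  then have even: "integral {-pi..0} ?F = integral {0..pi} ?F" by simp
  have quarters: "integral {0..pi/2} ?F + integral {pi/2..pi} ?F = integral {0..pi} ?F"
    by (rule Henstock_Kurzweil_Integration.integral_combine[OF _ _ err_cos_integrable]) auto
  have "integral {-pi/2..0} (?F \<circ> (+) pi) = integral {-pi/2+pi..0+pi} ?F"
    by (rule integral_shift_Icc_real)
  then have "integral {pi/2..pi} ?F = integral {-(pi/2)..-0} (\<lambda>x. ?G (-x))"
    by (simp add: o_def)
  also have "\<dots> = integral {0..pi/2} ?G"
    by (rule Henstock_Kurzweil_Integration.integral_reflect_real)
  finally have subst: "integral {pi/2..pi} ?F = integral {0..pi/2} ?G" .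
  have "?G = (\<lambda>x. - err_cos (-R) x)" by (simp add: fun_eq_iff)
  then have "?G integrable_on {0..pi/2}" by (metis integrable_neg err_cos_integrable)
  then have "integral {0..pi/2} ?F \<le> integral {0..pi/2} ?G"
  proof (rule integral_le[OF err_cos_integrable])
    fix x assume "x \<in> {0..pi/2}"
    then have "0 \<le> cos x" by (intro cos_ge_zero) auto
    then have "(rnd_err (R * cos x) + rnd_err (-(R * cos x))) * cos x \<le> 0"
      using rnd_err_antisym by (simp add: mult_nonpos_nonneg)
    then show "?F x \<le> ?G x" by (simp add: algebra_simps)
  qed
  then show ?thesis using halves even quarters subst by linarith
qed

section \<open>Pieces between consecutive rounding levels\<close>

lemma integral_le_off_left_endpoint:
  fixes f g :: "real \<Rightarrow> real"
  assumes "f integrable_on {a..b}" "g integrable_on {a..b}"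
    and "\<And>x. a < x \<Longrightarrow> x \<le> b \<Longrightarrow> g x \<le> f x"
  shows "integral {a..b} g \<le> integral {a..b} f"
proof -
  let ?h = "\<lambda>x. if x = a then g x else f x"
  have "integral {a..b} f = integral {a..b} ?h"
    by (rule integral_spike[where S="{a}"]) auto
  moreover have "?h integrable_on {a..b}"
    by (rule integrable_spike[OF assms(1), where S="{a}"]) auto
  then have "integral {a..b} g \<le> integral {a..b} ?h"
    by (rule integral_le[OF assms(2)]) (use assms(3) in auto)
  ultimately show ?thesis by simp
qed

text \<open>Error of the trapezoidal rule for sin: if cos \<ge> k on [a,b], the trapezoid
  underestimates the integral of cos by at least k (b - a)^3 / 12.  Proved by differentiating
  twice in the right endpoint.\<close>
lemma sin_trapezoid_error:
  fixes a b k :: real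
  assumes ab: "a \<le> b" and k: "\<And>x. a \<le> x \<Longrightarrow> x \<le> b \<Longrightarrow> k \<le> cos x"
  shows "k * (b - a)^3 / 12 \<le> sin b - sin a - (cos a + cos b) * (b - a) / 2"
proof -
  define p1 where "p1 x = (cos x - cos a)/2 + (x - a) * sin x/2 - k * (x - a)^2/4" for x
  define p where "p x = sin x - sin a - (cos a + cos x) * (x - a)/2 - k * (x - a)^3/12" for x
  have d1: "DERIV p1 x :> (x - a) * (cos x - k)/2" for x
    unfolding p1_def
    by (auto intro!: derivative_eq_intros simp: field_simps power2_eq_square)
  have d: "DERIV p x :> p1 x" for x
    unfolding p_def p1_def
    by (auto intro!: derivative_eq_intros simp: field_simps power2_eq_square power3_eq_cube)
  have p1_nonneg: "0 \<le> p1 x" if "a \<le> x" "x \<le> b" for x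
  proof -
    have "p1 a \<le> p1 x"
      by (rule DERIV_nonneg_imp_nondecreasing[OF that(1)])
         (use d1 k that in \<open>auto intro!: exI mult_nonneg_nonneg\<close>)
    then show ?thesis by (simp add: p1_def)
  qed
  have "p a \<le> p b"
    by (rule DERIV_nonneg_imp_nondecreasing[OF ab]) (use d p1_nonneg in blast)
  then show ?thesis by (simp add: p_def)
qed

text \<open>Step (2): on an arc where R cos t runs from j + 1/2 down to j - 1/2 we have
  e(R cos t) cos t = j cos t - j^2/R + (R cos t - j)^2/R, and the explicit integral of the
  first two terms is j times the trapezoid error above.\<close>
lemma integral_level_arc:
  fixes R a b k j :: real
  assumes R: "R > 0" and j: "j \<in> \<int>" "0 \<le> j" and ab: "0 \<le> a" "a \<le> b" "b \<le> pi/2"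
    and ca: "R * cos a = j + 1/2" and cb: "R * cos b = j - 1/2" and k: "k \<le> cos b"
  shows "j * k * (b - a)^3 / 12 \<le> integral {a..b} (err_cos R)"
proof -
  define g where "g t = j * cos t - j^2 / R" for t
  have g_int: "(g has_integral ((j * sin b - j^2/R * b) - (j * sin a - j^2/R * a))) {a..b}"
    unfolding g_def
    by (rule fundamental_theorem_of_calculus[OF ab(2)])
       (use R in \<open>auto intro!: derivative_eq_intros
          simp: has_real_derivative_iff_has_vector_derivative[symmetric]\<close>)
  have "integral {a..b} g \<le> integral {a..b} (err_cos R)"
  proof (rule integral_le_off_left_endpoint[OF err_cos_integrable])
    show "g integrable_on {a..b}" using g_int by blast
    fix x assume x: "a < x" "x \<le> b"
    have "cos b \<le> cos x" "cos x < cos a"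
      using x ab by (simp_all add: cos_mono_le_eq cos_mono_less_eq)
    then have "j - 1/2 \<le> R * cos x" "R * cos x < j + 1/2"
      using ca cb R by (simp_all add: mult_left_mono mult_strict_left_mono flip: ca cb)
    moreover obtain m where m: "j = of_int m" using j(1) Ints_cases by blast
    ultimately have "\<lfloor>R * cos x + 1/2\<rfloor> = m" by (intro floor_unique) auto
    then have "err_cos R x = g x + (R * cos x - j)^2 / R"
      unfolding rnd_err_def g_def m using R by (simp add: field_simps power2_eq_square)
    then show "g x \<le> err_cos R x" using R by simp
  qed
  moreover have "j * k * (b - a)^3 / 12 \<le> integral {a..b} g"
  proof -
    have jR: "j / R = (cos a + cos b) / 2" using ca cb R by (simp add: field_simps)
    have "integral {a..b} g = (j * sin b - j^2/R * b) - (j * sin a - j^2/R * a)"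
      by (rule integral_unique[OF g_int])
    also have "\<dots> = j * (sin b - sin a - (j/R) * (b - a))"
      using R by (simp add: field_simps power2_eq_square)
    also have "\<dots> = j * (sin b - sin a - (cos a + cos b) * (b - a) / 2)" by (simp add: jR)
    finally have eq: "integral {a..b} g = j * (sin b - sin a - (cos a + cos b) * (b - a) / 2)" .
    have "k \<le> cos x" if "a \<le> x" "x \<le> b" for x
    proof -
      have "cos b \<le> cos x" using that ab by (simp add: cos_mono_le_eq)
      then show ?thesis using k by linarith
    qed
    then have "k * (b - a)^3 / 12 \<le> sin b - sin a - (cos a + cos b) * (b - a) / 2"
      by (rule sin_trapezoid_error[OF ab(2)])
    from mult_left_mono[OF this j(2)] show ?thesis using eq by simp
  qed
  ultimately show ?thesis by linarith
qed

text \<open>Beyond the lowest level R cos t = 1/2 the rounding error is R cos t \<ge> 0.\<close>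
lemma integral_below_first_level_nonneg:
  fixes R a :: real
  assumes R: "R > 0" and a: "0 \<le> a" "a \<le> pi/2" and ca: "R * cos a = 1/2"
  shows "0 \<le> integral {a..pi/2} (err_cos R)"
proof -
  have "integral {a..pi/2} (\<lambda>_. 0) \<le> integral {a..pi/2} (err_cos R)"
  proof (rule integral_le_off_left_endpoint[OF err_cos_integrable])
    show "(\<lambda>_. 0::real) integrable_on {a..pi/2}" by (rule integrable_0)
    fix x assume x: "a < x" "x \<le> pi/2"
    have "cos x < cos a" using x a by (simp add: cos_mono_less_eq)
    then have "R * cos x < R * cos a" using R by simp
    moreover have "0 \<le> cos x" using x a by (intro cos_ge_zero) auto
    ultimately have "\<lfloor>R * cos x + 1/2\<rfloor> = 0" using ca R by (intro floor_unique) auto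
    then show "0 \<le> err_cos R x" using R \<open>0 \<le> cos x\<close> by (simp add: rnd_err_def)
  qed
  then show ?thesis by simp
qed

definition level_angle :: "real \<Rightarrow> nat \<Rightarrow> real" where
  "level_angle R j = arccos ((real j + 1/2) / R)"

lemma level_angle:
  assumes R: "R > 0" and j: "real j + 1/2 \<le> R"
  shows "0 \<le> level_angle R j" "level_angle R j \<le> pi/2" "R * cos (level_angle R j) = real j + 1/2"
proof -
  have h: "-1 \<le> (real j + 1/2) / R" "(real j + 1/2) / R \<le> 1" "0 \<le> (real j + 1/2) / R"
    using R j by (auto simp: field_simps)
  show "0 \<le> level_angle R j" unfolding level_angle_def using h by (simp add: arccos_lbound)
  show "level_angle R j \<le> pi/2" unfolding level_angle_def using h arccos_le_pi2 by blast
  show "R * cos (level_angle R j) = real j + 1/2"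
    unfolding level_angle_def cos_arccos[OF h(1) h(2)] using R by simp
qed

lemma level_angle_Suc_le:
  assumes "R > 0" and "real (Suc j) + 1/2 \<le> R"
  shows "level_angle R (Suc j) \<le> level_angle R j"
  unfolding level_angle_def using assms by (intro arccos_le_arccos) (auto simp: field_simps)

lemma integral_beyond_level_nonneg:
  assumes R: "R > 0" and j: "real j + 1/2 \<le> R"
  shows "0 \<le> integral {level_angle R j..pi/2} (err_cos R)"
  using j
proof (induction j)
  case 0
  then show ?case using level_angle[OF R 0] R by (intro integral_below_first_level_nonneg) auto
next
  case (Suc j)
  have j: "real j + 1/2 \<le> R" using Suc.prems by simp
  note lo = level_angle[OF R Suc.prems] and hi = level_angle[OF R j]
  have le: "level_angle R (Suc j) \<le> level_angle R j" by (rule level_angle_Suc_le[OF R Suc.prems])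
  have "real (Suc j) * 0 * (level_angle R j - level_angle R (Suc j))^3 / 12
      \<le> integral {level_angle R (Suc j)..level_angle R j} (err_cos R)"
    by (rule integral_level_arc[OF R]) (use lo hi le in \<open>auto simp: cos_ge_zero\<close>)
  moreover have "integral {level_angle R (Suc j)..level_angle R j} (err_cos R)
      + integral {level_angle R j..pi/2} (err_cos R)
      = integral {level_angle R (Suc j)..pi/2} (err_cos R)"
    by (rule Henstock_Kurzweil_Integration.integral_combine[OF le hi(2) err_cos_integrable])
  ultimately show ?case using Suc.IH[OF j] by simp
qed

lemma quarter_integral_lower:
  assumes R: "R > 0" and j: "real (Suc j) + 1/2 \<le> R" and k: "k \<le> cos (level_angle R j)"
  defines "a \<equiv> level_angle R (Suc j)" and "b \<equiv> level_angle R j"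
  shows "real (Suc j) * k * (b - a)^3 / 12 - a / 2 \<le> integral {0..pi/2} (err_cos R)"
proof -
  have j': "real j + 1/2 \<le> R" using j by simp
  note la = level_angle[OF R j, folded a_def] and lb = level_angle[OF R j', folded b_def]
  have ab: "a \<le> b" unfolding a_def b_def by (rule level_angle_Suc_le[OF R j])
  have split1: "integral {0..a} (err_cos R) + integral {a..pi/2} (err_cos R)
      = integral {0..pi/2} (err_cos R)"
    by (rule Henstock_Kurzweil_Integration.integral_combine[OF _ _ err_cos_integrable]) (use la in auto)
  have split2: "integral {a..b} (err_cos R) + integral {b..pi/2} (err_cos R)
      = integral {a..pi/2} (err_cos R)"
    by (rule Henstock_Kurzweil_Integration.integral_combine[OF ab _ err_cos_integrable]) (use lb in auto)
  have "integral {0..a} (\<lambda>_. -1/2::real) \<le> integral {0..a} (err_cos R)"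
    by (rule integral_le[OF _ err_cos_integrable]) (use err_cos_lower[of R] in auto)
  then have near_zero: "- a / 2 \<le> integral {0..a} (err_cos R)" using la by simp
  have arc: "real (Suc j) * k * (b - a)^3 / 12 \<le> integral {a..b} (err_cos R)"
    by (rule integral_level_arc[OF R]) (use la lb ab k in \<open>auto simp: b_def Ints_of_nat\<close>)
  have "0 \<le> integral {b..pi/2} (err_cos R)"
    unfolding b_def by (rule integral_beyond_level_nonneg[OF R j'])
  then show ?thesis using split1 split2 near_zero arc by linarith
qed

section \<open>Size of the level angles\<close>

lemma one_minus_cos_le:
  fixes t :: real
  assumes t: "0 \<le> t"
  shows "1 - cos t \<le> t^2 / 2"
proof -
  have "cos 0 - 1 + 0^2/2 \<le> cos t - 1 + t^2/2"
    by (rule DERIV_nonneg_imp_nondecreasing[OF t])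
       (auto intro!: exI derivative_eq_intros simp: sin_x_le_x)
  then show ?thesis by simp
qed

text \<open>While cos stays above 1/2 we have sin x \<ge> x/2, hence 1 - cos t \<ge> t^2/4.\<close>
lemma one_minus_cos_ge:
  fixes t :: real
  assumes t: "0 \<le> t" "t \<le> pi" and c: "1/2 \<le> cos t"
  shows "t^2 / 4 \<le> 1 - cos t"
proof -
  have sin_ge: "x / 2 \<le> sin x" if "0 \<le> x" "x \<le> t" for x
  proof -
    have "sin 0 - 0/2 \<le> sin x - x/2"
    proof (rule DERIV_nonneg_imp_nondecreasing[OF that(1)])
      fix y assume "0 \<le> y" "y \<le> x"
      then have "cos t \<le> cos y" using that t by (simp add: cos_mono_le_eq)
      then show "\<exists>d. ((\<lambda>x. sin x - x / 2) has_real_derivative d) (at y) \<and> 0 \<le> d"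
        using c by (auto intro!: exI derivative_eq_intros)
    qed
    then show ?thesis by simp
  qed
  have "1 - cos 0 - 0^2/4 \<le> 1 - cos t - t^2/4"
    by (rule DERIV_nonneg_imp_nondecreasing[OF t(1)])
       (use sin_ge in \<open>auto intro!: exI derivative_eq_intros\<close>)
  then show ?thesis by simp
qed

lemma angle_sqrt_upper:
  assumes "0 \<le> t" "t \<le> pi" "1/2 \<le> cos t" "0 \<le> R"
  shows "t * sqrt R \<le> 2 * sqrt (R * (1 - cos t))"
proof -
  have "t^2 * R \<le> 4 * (R * (1 - cos t))"
    using mult_right_mono[OF one_minus_cos_ge[OF assms(1-3)] assms(4)] by (simp add: algebra_simps)
  then have "sqrt (t^2 * R) \<le> sqrt (2^2 * (R * (1 - cos t)))" by simp
  then show ?thesis using assms by (simp add: real_sqrt_mult)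
qed

lemma angle_sqrt_lower:
  assumes "0 \<le> t" "0 \<le> R"
  shows "sqrt (2 * (R * (1 - cos t))) \<le> t * sqrt R"
proof -
  have "2 * (R * (1 - cos t)) \<le> t^2 * R"
    using mult_right_mono[OF one_minus_cos_le[OF assms(1)] assms(2)] by (simp add: algebra_simps)
  then have "sqrt (2 * (R * (1 - cos t))) \<le> sqrt (t^2 * R)" by simp
  then show ?thesis using assms by (simp add: real_sqrt_mult)
qed

text \<open>Step (4), for the normalised integral.  With n = round R and j = n - 2 the arc
  [level_angle R (j+1), level_angle R j] is the last complete one before t = 0.\<close>
lemma normalised_integral_lower:
  fixes R :: real
  defines "e \<equiv> R + 1/2 - of_int \<lfloor>R + 1/2\<rfloor>"
  assumes R: "R \<ge> 10" and e: "0 \<le> e" "e \<le> 1/16000"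
  shows "1 / (20 * sqrt R) \<le> integral {-pi..pi} (err_cos R)"
proof -
  define j where "j = nat (\<lfloor>R + 1/2\<rfloor> - 2)"
  have Rj: "real j = R - 3/2 - e" using R e unfolding j_def e_def by simp
  have R0: "R > 0" and j_le: "real (Suc j) + 1/2 \<le> R" "real j + 1/2 \<le> R" using R Rj e by auto
  define a where "a = level_angle R (Suc j)"
  define b where "b = level_angle R j"
  note la = level_angle[OF R0 j_le(1), folded a_def] and lb = level_angle[OF R0 j_le(2), folded b_def]
  have cos_a: "R * (1 - cos a) = e" and cos_b: "R * (1 - cos b) = 1 + e"
    using la(3) lb(3) Rj by (simp_all add: algebra_simps)
  have "R * cos b = R - (1 + e)" "R * cos a = R - e"
    using cos_a cos_b by (simp_all add: algebra_simps)
  then have "R * (1/2) \<le> R * cos b" "R * (1/2) \<le> R * cos a" using R e by simp_all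
  then have half_le_cos_b: "1/2 \<le> cos b" and "1/2 \<le> cos a" using R0 by simp_all
  then have "a * sqrt R \<le> 2 * sqrt e"
    using angle_sqrt_upper[of a R] la R0 cos_a by simp
  also have "\<dots> \<le> 2 * sqrt (1/14400)" using e by simp
  finally have a_small: "a * sqrt R \<le> 1/60" by (simp add: real_sqrt_divide)
  have "7/5 \<le> sqrt (2::real)" by (rule real_le_rsqrt) (simp add: power2_eq_square)
  also have "\<dots> \<le> sqrt (2 * (R * (1 - cos b)))" using cos_b e by simp
  also have "\<dots> \<le> b * sqrt R" using angle_sqrt_lower[of b R] lb R0 by simp
  finally have "1 \<le> (b - a) * sqrt R" using a_small by (simp add: left_diff_distrib)
  then have "1 \<le> ((b - a) * sqrt R)^3" by (rule one_le_power)
  also have "((b - a) * sqrt R)^3 = (b - a)^3 * (sqrt R * sqrt R * sqrt R)"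
    by (simp add: power_mult_distrib power3_eq_cube)
  finally have gap: "1 \<le> (b - a)^3 * (R * sqrt R)" using R0 by simp
  have "R / 2 * (1 / (R * sqrt R)) \<le> real (Suc j) * (b - a)^3"
    using gap Rj R e R0 by (intro mult_mono) (auto simp: divide_le_eq mult.commute)
  then have "1 / (48 * sqrt R) \<le> real (Suc j) * (1/2) * (b - a)^3 / 12" using R0 by simp
  moreover have "a / 2 \<le> 1 / (120 * sqrt R)" using a_small R0 by (simp add: field_simps)
  moreover have "real (Suc j) * (1/2) * (b - a)^3 / 12 - a / 2 \<le> integral {0..pi/2} (err_cos R)"
    using quarter_integral_lower[OF R0 j_le(1) half_le_cos_b[unfolded b_def]]
    by (simp add: a_def b_def)
  ultimately have "1 / (80 * sqrt R) \<le> integral {0..pi/2} (err_cos R)" by simp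
  then show ?thesis using integral_period_ge_quarter[of R] by linarith
qed

theorem lemma5p1:
  shows "\<exists>\<epsilon>0>0. \<exists>C1>0. \<exists>R0. \<forall>r \<delta> :: real.
    r > 0 \<longrightarrow> \<delta> > 0 \<longrightarrow>
    (let R = r / \<delta>; \<epsilon> = R + 1/2 - of_int \<lfloor>R + 1/2\<rfloor> in
      0 \<le> \<epsilon> \<longrightarrow> \<epsilon> \<le> \<epsilon>0 \<longrightarrow> R \<ge> R0 \<longrightarrow>
      integral {-pi..pi} (\<lambda>\<theta>. Dd \<delta> (r * cos \<theta>) * cos \<theta>)
        \<ge> C1 * \<delta> powr (3/2) / sqrt r)"
  unfolding Let_def
proof (rule exI[of _ "1/16000"], rule conjI, simp, rule exI[of _ "1/20"], rule conjI, simp,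
    rule exI[of _ 10], intro allI impI)
  fix r \<delta> :: real
  assume r: "r > 0" and d: "\<delta> > 0"
    and e: "0 \<le> r / \<delta> + 1/2 - of_int \<lfloor>r / \<delta> + 1/2\<rfloor>"
      "r / \<delta> + 1/2 - of_int \<lfloor>r / \<delta> + 1/2\<rfloor> \<le> 1/16000"
    and R: "10 \<le> r / \<delta>"
  define I where "I = integral {-pi..pi} (err_cos (r / \<delta>))"
  have scaled: "integral {-pi..pi} (\<lambda>\<theta>. Dd \<delta> (r * cos \<theta>) * cos \<theta>) = \<delta> * I"
    unfolding I_def by (simp add: Dd_cos_scale[OF d] err_cos_integrable)
  have "1/20 * \<delta> powr (3/2) / sqrt r = \<delta> * (1 / (20 * sqrt (r / \<delta>)))"
    using r d by (simp add: powr_add[of \<delta> 1 "1/2", simplified] powr_half_sqrt real_sqrt_divide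
        field_simps)
  also have "\<dots> \<le> \<delta> * I"
    using normalised_integral_lower[OF R e] d unfolding I_def by (intro mult_left_mono) auto
  finally show "1/20 * \<delta> powr (3/2) / sqrt r \<le> integral {-pi..pi} (\<lambda>\<theta>. Dd \<delta> (r * cos \<theta>) * cos \<theta>)"
    using scaled by simp
qed

end
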